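(* Let $0<\delta<\frac12$, let $f\in\mathrm{Diff}_+^{1,\delta}(I)$ and let $G\subseteq\mathrm{Diff}_0^3(I)$. Then for every $C>0$ the set $A_C=\{\log(g'): g\in G,\ p_\delta(g\circ f)\le C\}$ has compact closure in the space $C(I)$ of continuous real functions on $I$ with the sup metric.
   Context: $I=[0,1]$. $\mathrm{Diff}_+^1(I)$ is the set of $C^1$ diffeomorphisms of $I$ fixing $0$ and $1$; $\mathrm{Diff}_+^{1,\delta}(I)$ is the set of $f\in\mathrm{Diff}_+^1(I)$ with $f'$ Hölder of exponent $\delta$. $\mathrm{Diff}_0^3(I)$ is the set of $C^3$ diffeomorphisms $f$ of $I$ fixing $0$ and $1$ with $f'(0)=f'(1)=1$. For $f\in\mathrm{Diff}_+^{1,\delta}(I)$, $p_\delta(f)=|\log(f'(0))|+\sup_{t_1\ne t_2\in I}\frac{|\log(f'(t_2))-\log(f'(t_1))|}{|t_2-t_1|^\delta}$. *)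

theory Defs
  imports "HOL-Analysis.Analysis"
begin

abbreviation I01 :: "real set" where "I01 \<equiv> {0..1}"

definition Dv :: "(real \<Rightarrow> real) \<Rightarrow> real \<Rightarrow> real" where
  "Dv f x = vector_derivative f (at x within I01)"

definition is_Ck_on_I :: "nat \<Rightarrow> (real \<Rightarrow> real) \<Rightarrow> bool" where
  "is_Ck_on_I k f \<longleftrightarrow>
     continuous_on I01 f \<and>
     (\<forall>j<k. \<forall>x\<in>I01. (((Dv ^^ j) f) has_vector_derivative (Dv ^^ (Suc j)) f x) (at x within I01)) \<and>
     continuous_on I01 ((Dv ^^ k) f)"

text \<open>C^1 diffeomorphisms of I fixing 0 and 1 (inverse C^1 iff derivative nonvanishing).\<close>
definition Diff1_plus :: "(real \<Rightarrow> real) \<Rightarrow> bool" where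
  "Diff1_plus f \<longleftrightarrow> bij_betw f I01 I01 \<and> f 0 = 0 \<and> f 1 = 1 \<and> is_Ck_on_I 1 f
     \<and> (\<forall>x\<in>I01. Dv f x \<noteq> 0)"

definition Diff1_delta_plus :: "real \<Rightarrow> (real \<Rightarrow> real) \<Rightarrow> bool" where
  "Diff1_delta_plus \<delta> f \<longleftrightarrow> Diff1_plus f \<and>
     (\<exists>K. \<forall>s\<in>I01. \<forall>t\<in>I01. \<bar>Dv f t - Dv f s\<bar> \<le> K * \<bar>t - s\<bar> powr \<delta>)"

definition Diff0_3 :: "(real \<Rightarrow> real) \<Rightarrow> bool" where
  "Diff0_3 f \<longleftrightarrow> Diff1_plus f \<and> is_Ck_on_I 3 f \<and> Dv f 0 = 1 \<and> Dv f 1 = 1"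

definition p_delta :: "real \<Rightarrow> (real \<Rightarrow> real) \<Rightarrow> real" where
  "p_delta \<delta> f = \<bar>ln (Dv f 0)\<bar> +
     (SUP tt \<in> {(t1, t2). t1 \<in> I01 \<and> t2 \<in> I01 \<and> t1 \<noteq> t2}.
        \<bar>ln (Dv f (snd tt)) - ln (Dv f (fst tt))\<bar> / \<bar>snd tt - fst tt\<bar> powr \<delta>)"

definition CI_metric :: "(real \<Rightarrow> real) metric" where
  "CI_metric = cfunspace (top_of_set I01) euclidean_metric"

end

theory Submission
  imports Defs "HOL-Complex_Analysis.Great_Picard"
begin

(* Since (g o f)' = (g' o f) f', the function log g' o f is log (g o f)' - log f'. The first term is
   delta-Hoelder with constant p_delta (g o f) <= C, the second with a constant depending only on f, and
   f^-1 is Lipschitz because f' is bounded below. Hence every log g' in A_C is delta-Hoelder with one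
   constant K and vanishes at 0, so A_C is bounded and equicontinuous; by Arzela-Ascoli it is totally
   bounded in the complete space C(I), and its closure is compact. *)

definition holder_on :: "real \<Rightarrow> real \<Rightarrow> real set \<Rightarrow> (real \<Rightarrow> real) \<Rightarrow> bool" where
  "holder_on \<delta> K S h \<longleftrightarrow> (\<forall>x\<in>S. \<forall>y\<in>S. \<bar>h x - h y\<bar> \<le> K * \<bar>x - y\<bar> powr \<delta>)"

lemma holder_onD: "holder_on \<delta> K S h \<Longrightarrow> x \<in> S \<Longrightarrow> y \<in> S \<Longrightarrow> \<bar>h x - h y\<bar> \<le> K * \<bar>x - y\<bar> powr \<delta>"
  unfolding holder_on_def by blast

lemma holder_on_cong: "(\<And>x. x \<in> S \<Longrightarrow> h x = k x) \<Longrightarrow> holder_on \<delta> K S h \<longleftrightarrow> holder_on \<delta> K S k"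
  unfolding holder_on_def by simp

lemma holder_on_nonneg_I01: "holder_on \<delta> K I01 h \<Longrightarrow> 0 \<le> K"
  using holder_onD[of \<delta> K I01 h 0 1] by simp

lemma holder_on_I01_abs_diff_le:
  assumes "holder_on \<delta> K I01 h" "0 \<le> \<delta>" "x \<in> I01"
  shows "\<bar>h x - h 0\<bar> \<le> K"
proof -
  have "\<bar>x - 0\<bar> powr \<delta> \<le> 1" using assms(2,3) by (auto intro: powr_le1)
  then have "K * \<bar>x - 0\<bar> powr \<delta> \<le> K"
    using holder_on_nonneg_I01[OF assms(1)] by (simp add: mult_left_le)
  with holder_onD[OF assms(1) assms(3)] show ?thesis by force
qed

lemma holder_on_add:
  assumes "holder_on \<delta> K S h" "holder_on \<delta> L S k"
  shows "holder_on \<delta> (K + L) S (\<lambda>x. h x + k x)"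
  unfolding holder_on_def
proof (intro ballI)
  fix x y assume xy: "x \<in> S" "y \<in> S"
  have "\<bar>h x + k x - (h y + k y)\<bar> \<le> \<bar>h x - h y\<bar> + \<bar>k x - k y\<bar>" by linarith
  also have "\<dots> \<le> K * \<bar>x - y\<bar> powr \<delta> + L * \<bar>x - y\<bar> powr \<delta>"
    using assms xy by (intro add_mono holder_onD)
  finally show "\<bar>h x + k x - (h y + k y)\<bar> \<le> (K + L) * \<bar>x - y\<bar> powr \<delta>"
    by (simp add: distrib_right)
qed

lemma holder_on_diff:
  assumes "holder_on \<delta> K S h" "holder_on \<delta> L S k"
  shows "holder_on \<delta> (K + L) S (\<lambda>x. h x - k x)"
proof -
  have "holder_on \<delta> L S (\<lambda>x. - k x)"
    using assms(2) by (simp add: holder_on_def abs_minus_commute)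
  from holder_on_add[OF assms(1) this] show ?thesis by simp
qed

lemma holder_on_compose:
  assumes h: "holder_on \<delta> K T h" "0 \<le> K" and \<phi>: "L-lipschitz_on S \<phi>" "\<phi> ` S \<subseteq> T"
    and \<delta>: "0 \<le> \<delta>"
  shows "holder_on \<delta> (K * L powr \<delta>) S (h \<circ> \<phi>)"
  unfolding holder_on_def
proof (intro ballI)
  fix x y assume xy: "x \<in> S" "y \<in> S"
  have "\<bar>\<phi> x - \<phi> y\<bar> \<le> L * \<bar>x - y\<bar>"
    using lipschitz_onD[OF \<phi>(1) xy] by (simp add: dist_real_def)
  then have "\<bar>\<phi> x - \<phi> y\<bar> powr \<delta> \<le> L powr \<delta> * \<bar>x - y\<bar> powr \<delta>"
    using \<delta> lipschitz_on_nonneg[OF \<phi>(1)] by (metis abs_ge_zero powr_mono2 powr_mult)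
  then have "K * \<bar>\<phi> x - \<phi> y\<bar> powr \<delta> \<le> K * L powr \<delta> * \<bar>x - y\<bar> powr \<delta>"
    using h(2) by (simp add: mult_left_mono mult.assoc)
  with holder_onD[OF h(1)] xy \<phi>(2)
  show "\<bar>(h \<circ> \<phi>) x - (h \<circ> \<phi>) y\<bar> \<le> K * L powr \<delta> * \<bar>x - y\<bar> powr \<delta>"
    by (smt (verit) comp_apply image_subset_iff)
qed

lemma holder_on_if_lipschitz_on:
  assumes "L-lipschitz_on S h" "S \<subseteq> I01" "0 < \<delta>" "\<delta> \<le> 1"
  shows "holder_on \<delta> L S h"
  unfolding holder_on_def
proof (intro ballI)
  fix x y assume xy: "x \<in> S" "y \<in> S"
  have "x \<in> I01" "y \<in> I01" using xy assms(2) by auto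
  then have "\<bar>x - y\<bar> \<le> 1" by auto
  then have "\<bar>x - y\<bar> \<le> \<bar>x - y\<bar> powr \<delta>"
    using assms(3,4) by (cases "x = y") (auto intro: order_trans[OF _ powr_mono'[of _ 1]])
  with lipschitz_onD[OF assms(1) xy] lipschitz_on_nonneg[OF assms(1)]
  show "\<bar>h x - h y\<bar> \<le> L * \<bar>x - y\<bar> powr \<delta>"
    by (simp add: dist_real_def) (meson mult_left_mono order_trans)
qed

lemma abs_ln_diff_le:
  fixes a b m :: real
  assumes "0 < m" "m \<le> a" "m \<le> b"
  shows "\<bar>ln a - ln b\<bar> \<le> \<bar>a - b\<bar> / m"
proof -
  have *: "ln x - ln y \<le> \<bar>x - y\<bar> / m" if "m \<le> x" "m \<le> y" for x y
  proof -
    have "ln x - ln y = ln (x / y)" using that assms(1) by (simp add: ln_div)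
    also have "\<dots> \<le> (x - y) / y" using that assms(1) ln_le_minus_one[of "x / y"] by (simp add: diff_divide_distrib)
    also have "\<dots> \<le> \<bar>x - y\<bar> / m"
      using that assms(1) by (cases "x \<le> y") (auto simp: frac_le divide_nonpos_pos intro: order_trans[of _ 0])
    finally show ?thesis .
  qed
  show ?thesis using *[of a b] *[of b a] assms by (simp add: abs_minus_commute)
qed

lemma holder_on_ln:
  assumes "holder_on \<delta> K S h" "0 < m" "\<And>x. x \<in> S \<Longrightarrow> m \<le> h x"
  shows "holder_on \<delta> (K / m) S (\<lambda>x. ln (h x))"
  unfolding holder_on_def
proof (intro ballI)
  fix x y assume xy: "x \<in> S" "y \<in> S"
  have "\<bar>ln (h x) - ln (h y)\<bar> \<le> \<bar>h x - h y\<bar> / m"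
    using assms xy by (intro abs_ln_diff_le) auto
  also have "\<dots> \<le> K * \<bar>x - y\<bar> powr \<delta> / m"
    using holder_onD[OF assms(1) xy] assms(2) by (intro divide_right_mono) auto
  finally show "\<bar>ln (h x) - ln (h y)\<bar> \<le> K / m * \<bar>x - y\<bar> powr \<delta>" by simp
qed

lemma holder_on_uniform_modulus:
  assumes "0 < \<delta>" "0 < e"
  obtains d where "0 < d"
    "\<And>h x y. holder_on \<delta> K S h \<Longrightarrow> x \<in> S \<Longrightarrow> y \<in> S \<Longrightarrow> \<bar>x - y\<bar> < d \<Longrightarrow> \<bar>h x - h y\<bar> < e"
proof
  define K' where "K' = max K 0 + 1"
  have K': "0 < K'" "K \<le> K'" by (auto simp: K'_def)
  show "0 < (e / K') powr (1 / \<delta>)" using assms K' by simp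
  fix h x y assume h: "holder_on \<delta> K S h" and xy: "x \<in> S" "y \<in> S" "\<bar>x - y\<bar> < (e / K') powr (1 / \<delta>)"
  have "\<bar>x - y\<bar> powr \<delta> < ((e / K') powr (1 / \<delta>)) powr \<delta>"
    using xy(3) assms(1) by (intro powr_less_mono2) auto
  also have "\<dots> = e / K'" using assms K' by (simp add: powr_powr)
  finally have "K' * \<bar>x - y\<bar> powr \<delta> < e" using K' by (simp add: field_simps)
  moreover have "K * \<bar>x - y\<bar> powr \<delta> \<le> K' * \<bar>x - y\<bar> powr \<delta>" using K' by (simp add: mult_right_mono)
  ultimately show "\<bar>h x - h y\<bar> < e" using holder_onD[OF h xy(1,2)] by linarith
qed

lemma holder_on_imp_continuous_on:
  assumes "holder_on \<delta> K S h" "0 < \<delta>"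
  shows "continuous_on S h"
  unfolding continuous_on_iff dist_real_def
proof (intro ballI allI impI)
  fix x e :: real assume "x \<in> S" "0 < e"
  with holder_on_uniform_modulus[OF \<open>0 < \<delta>\<close> \<open>0 < e\<close>, of K S] assms(1)
  show "\<exists>d>0. \<forall>y\<in>S. \<bar>y - x\<bar> < d \<longrightarrow> \<bar>h y - h x\<bar> < e" by metis
qed

lemma mvt_I01:
  assumes F: "\<And>x. x \<in> I01 \<Longrightarrow> (F has_vector_derivative F' x) (at x within I01)"
    and ab: "a \<in> I01" "b \<in> I01"
  obtains \<xi> where "\<xi> \<in> I01" "F b - F a = (b - a) * F' \<xi>"
proof -
  have *: "\<exists>\<xi>\<in>{s..t}. F t - F s = (t - s) * F' \<xi>" if "s \<in> I01" "t \<in> I01" "s \<le> t" for s t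
  proof (rule mvt_very_simple[OF \<open>s \<le> t\<close>, of F "\<lambda>x h. h * F' x", simplified])
    fix x assume "s \<le> x" "x \<le> t"
    with that have "(F has_vector_derivative F' x) (at x within {s..t})"
      by (intro has_vector_derivative_within_subset[OF F]) auto
    then show "(F has_derivative (\<lambda>h. h * F' x)) (at x within {s..t})"
      by (simp add: has_vector_derivative_def)
  qed
  show ?thesis
  proof (cases "a \<le> b")
    case True
    then obtain \<xi> where "\<xi> \<in> {a..b}" "F b - F a = (b - a) * F' \<xi>" using *[OF ab] by auto
    then show ?thesis using ab that[of \<xi>] by auto
  next
    case False
    then obtain \<xi> where "\<xi> \<in> {b..a}" "F a - F b = (a - b) * F' \<xi>" using *[OF ab(2,1)] by auto
    then show ?thesis using ab that[of \<xi>] by (auto simp: algebra_simps)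
  qed
qed

lemma lipschitz_on_I01_if_deriv_bounded:
  assumes F: "\<And>x. x \<in> I01 \<Longrightarrow> (F has_vector_derivative F' x) (at x within I01)"
    and M: "\<And>x. x \<in> I01 \<Longrightarrow> \<bar>F' x\<bar> \<le> M"
  shows "M-lipschitz_on I01 F"
proof (rule lipschitz_onI)
  show "0 \<le> M" using M[of 0] by auto
  fix a b assume ab: "a \<in> I01" "b \<in> I01"
  obtain \<xi> where "\<xi> \<in> I01" "F b - F a = (b - a) * F' \<xi>" using mvt_I01[OF F ab] .
  then have "\<bar>F a - F b\<bar> = \<bar>F' \<xi>\<bar> * \<bar>a - b\<bar>" by (metis abs_minus_commute abs_mult mult.commute)
  also have "\<dots> \<le> M * \<bar>a - b\<bar>" using M[OF \<open>\<xi> \<in> I01\<close>] by (simp add: mult_right_mono)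
  finally show "dist (F a) (F b) \<le> M * dist a b" by (simp add: dist_real_def)
qed

lemma deriv_lower_bound_I01:
  assumes F: "\<And>x. x \<in> I01 \<Longrightarrow> (F has_vector_derivative F' x) (at x within I01)"
    and m: "\<And>x. x \<in> I01 \<Longrightarrow> m \<le> F' x" "0 \<le> m" and ab: "a \<in> I01" "b \<in> I01"
  shows "m * \<bar>b - a\<bar> \<le> \<bar>F b - F a\<bar>"
proof -
  obtain \<xi> where "\<xi> \<in> I01" "F b - F a = (b - a) * F' \<xi>" using mvt_I01[OF F ab] .
  moreover have "m \<le> \<bar>F' \<xi>\<bar>" using m(1)[OF \<open>\<xi> \<in> I01\<close>] by linarith
  ultimately show ?thesis by (simp add: abs_mult mult_right_mono mult.commute)
qed

lemma is_Ck_on_I_continuous_on: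
  assumes "is_Ck_on_I k f" "j \<le> k"
  shows "continuous_on I01 ((Dv ^^ j) f)"
proof (cases "j = k")
  case False
  with assms have "\<forall>x\<in>I01. ((Dv ^^ j) f has_vector_derivative (Dv ^^ Suc j) f x) (at x within I01)"
    unfolding is_Ck_on_I_def by simp
  then show ?thesis
    by (auto simp: continuous_on_eq_continuous_within intro: has_vector_derivative_continuous)
qed (use assms in \<open>simp add: is_Ck_on_I_def\<close>)

lemma is_Ck_on_I_lipschitz_Dv:
  assumes "is_Ck_on_I k f" "2 \<le> k"
  obtains M where "M-lipschitz_on I01 (Dv f)"
proof -
  have "continuous_on I01 ((Dv ^^ 2) f)" using is_Ck_on_I_continuous_on[OF assms] .
  then have "bounded ((Dv ^^ 2) f ` I01)" by (intro compact_imp_bounded compact_continuous_image) auto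
  then obtain M where "\<And>x. x \<in> I01 \<Longrightarrow> \<bar>(Dv ^^ 2) f x\<bar> \<le> M" by (meson bounded_real image_eqI)
  moreover have "(Dv f has_vector_derivative (Dv ^^ 2) f x) (at x within I01)" if "x \<in> I01" for x
  proof -
    have "1 < k" using assms(2) by simp
    with assms(1) that have "((Dv ^^ 1) f has_vector_derivative (Dv ^^ Suc 1) f x) (at x within I01)"
      unfolding is_Ck_on_I_def by blast
    then show ?thesis by (simp add: numeral_2_eq_2)
  qed
  ultimately show ?thesis using that lipschitz_on_I01_if_deriv_bounded by blast
qed

lemma Diff1_plus_has_vector_derivative:
  "Diff1_plus \<phi> \<Longrightarrow> x \<in> I01 \<Longrightarrow> (\<phi> has_vector_derivative Dv \<phi> x) (at x within I01)"
  unfolding Diff1_plus_def is_Ck_on_I_def by auto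

lemma Diff1_plus_continuous_on_Dv: "Diff1_plus \<phi> \<Longrightarrow> continuous_on I01 (Dv \<phi>)"
  unfolding Diff1_plus_def is_Ck_on_I_def by auto

lemma Diff1_plus_image: "Diff1_plus \<phi> \<Longrightarrow> \<phi> ` I01 = I01"
  unfolding Diff1_plus_def by (simp add: bij_betw_imp_surj_on)

lemma Diff1_plus_Dv_pos:
  assumes \<phi>: "Diff1_plus \<phi>" and x: "x \<in> I01"
  shows "0 < Dv \<phi> x"
proof (rule ccontr)
  assume "\<not> 0 < Dv \<phi> x"
  obtain \<xi> where \<xi>: "\<xi> \<in> I01" "\<phi> 1 - \<phi> 0 = (1 - 0) * Dv \<phi> \<xi>"
    using mvt_I01[OF Diff1_plus_has_vector_derivative[OF \<phi>], of 0 1] by auto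
  have "connected (Dv \<phi> ` I01)"
    by (intro connected_continuous_image Diff1_plus_continuous_on_Dv[OF \<phi>]) auto
  moreover have "Dv \<phi> \<xi> = 1" using \<xi> \<phi> by (simp add: Diff1_plus_def)
  ultimately have "0 \<in> Dv \<phi> ` I01"
    using \<xi>(1) x \<open>\<not> 0 < Dv \<phi> x\<close> unfolding connected_iff_interval
    by (metis image_eqI linorder_not_less zero_le_one)
  then show False using \<phi> by (auto simp: Diff1_plus_def)
qed

lemma Diff1_plus_Dv_lower_bound:
  assumes "Diff1_plus \<phi>"
  obtains m where "0 < m" "\<And>x. x \<in> I01 \<Longrightarrow> m \<le> Dv \<phi> x"
proof -
  obtain x where "x \<in> I01" "\<forall>y\<in>I01. Dv \<phi> x \<le> Dv \<phi> y"
    using continuous_attains_inf[OF _ _ Diff1_plus_continuous_on_Dv[OF assms]] by auto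
  then show ?thesis using that Diff1_plus_Dv_pos[OF assms] by blast
qed

lemma Diff1_plus_lipschitz_on:
  assumes "Diff1_plus \<phi>"
  obtains M where "M-lipschitz_on I01 \<phi>"
proof -
  have "bounded (Dv \<phi> ` I01)"
    by (intro compact_imp_bounded compact_continuous_image Diff1_plus_continuous_on_Dv[OF assms]) auto
  then obtain M where "\<And>x. x \<in> I01 \<Longrightarrow> \<bar>Dv \<phi> x\<bar> \<le> M" by (meson bounded_real image_eqI)
  with that Diff1_plus_has_vector_derivative[OF assms] show ?thesis
    by (metis lipschitz_on_I01_if_deriv_bounded)
qed

lemma Dv_comp:
  assumes f: "Diff1_plus f" and g: "Diff1_plus g" and x: "x \<in> I01"
  shows "Dv (g \<circ> f) x = Dv g (f x) * Dv f x"
proof -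
  have "(g has_vector_derivative Dv g (f x)) (at (f x) within f ` I01)"
    using Diff1_plus_has_vector_derivative[OF g] Diff1_plus_image[OF f] x by (metis image_eqI)
  from vector_diff_chain_within[OF Diff1_plus_has_vector_derivative[OF f x] this]
  have "((g \<circ> f) has_vector_derivative Dv g (f x) * Dv f x) (at x within I01)"
    by (simp add: mult.commute)
  then show ?thesis
    unfolding Dv_def using x by (intro vector_derivative_within_closed_interval) auto
qed

lemma lipschitz_on_inv_into_Diff1_plus:
  assumes f: "Diff1_plus f" and m: "0 < m" "\<And>x. x \<in> I01 \<Longrightarrow> m \<le> Dv f x"
  shows "(1 / m)-lipschitz_on I01 (inv_into I01 f)"
proof (rule lipschitz_onI)
  fix x y assume xy: "x \<in> I01" "y \<in> I01"
  let ?u = "inv_into I01 f x" and ?v = "inv_into I01 f y"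
  have uv: "?u \<in> I01" "?v \<in> I01" "f ?u = x" "f ?v = y"
    using xy Diff1_plus_image[OF f] inv_into_into[of _ f I01] f_inv_into_f[of _ f I01] by auto
  have "m * \<bar>?v - ?u\<bar> \<le> \<bar>f ?v - f ?u\<bar>"
    using m uv(1,2) by (intro deriv_lower_bound_I01[OF Diff1_plus_has_vector_derivative[OF f]]) auto
  then show "dist ?u ?v \<le> 1 / m * dist x y"
    using m uv by (simp add: dist_real_def field_simps abs_minus_commute)
qed (use m in simp)

lemma holder_on_ln_Dv_if_p_delta_le:
  assumes K: "holder_on \<delta> K I01 (\<lambda>x. ln (Dv \<phi> x))" and C: "p_delta \<delta> \<phi> \<le> C"
  shows "holder_on \<delta> C I01 (\<lambda>x. ln (Dv \<phi> x))"
  unfolding holder_on_def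
proof (intro ballI)
  define P where "P = {(t1, t2). t1 \<in> I01 \<and> t2 \<in> I01 \<and> t1 \<noteq> t2}"
  define R where "R tt = \<bar>ln (Dv \<phi> (snd tt)) - ln (Dv \<phi> (fst tt))\<bar> / \<bar>snd tt - fst tt\<bar> powr \<delta>" for tt
  have "R tt \<le> K" if "tt \<in> P" for tt
    using that holder_onD[OF K, of "snd tt" "fst tt"] by (auto simp: P_def R_def divide_le_eq)
  then have "bdd_above (R ` P)" by (intro bdd_above.I2)
  moreover have "(SUP tt\<in>P. R tt) \<le> C"
    using C unfolding p_delta_def P_def[symmetric] R_def[symmetric] by simp
  ultimately have RC: "R tt \<le> C" if "tt \<in> P" for tt
    using that by (meson cSUP_upper order_trans)
  fix x y assume "x \<in> I01" "y \<in> I01"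
  then show "\<bar>ln (Dv \<phi> x) - ln (Dv \<phi> y)\<bar> \<le> C * \<bar>x - y\<bar> powr \<delta>"
    using RC[of "(y, x)"] by (cases "x = y") (auto simp: P_def R_def divide_le_eq)
qed

(* A supremum of an unbounded set of reals is a junk value, so p_delta bounds the Hoelder quotients
   only of a function already known to be Hoelder; for ln (Dv (g o f)) this comes from g'' being bounded. *)

lemma holder_on_ln_Dv_if_p_delta_comp_le:
  assumes \<delta>: "0 < \<delta>" "\<delta> \<le> 1"
    and f: "Diff1_plus f" "0 < m" "\<And>x. x \<in> I01 \<Longrightarrow> m \<le> Dv f x"
    and L: "holder_on \<delta> L I01 (\<lambda>x. ln (Dv f x))"
    and g: "Diff1_plus g" "is_Ck_on_I k g" "2 \<le> k"
    and C: "p_delta \<delta> (g \<circ> f) \<le> C"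
  shows "holder_on \<delta> ((C + L) * (1 / m) powr \<delta>) I01 (\<lambda>x. ln (Dv g x))"
proof -
  have f_I01: "f ` I01 \<subseteq> I01" using Diff1_plus_image[OF f(1)] by simp
  have ln_Dv_comp: "ln (Dv (g \<circ> f) x) = ln (Dv g (f x)) + ln (Dv f x)" if "x \<in> I01" for x
  proof -
    have "f x \<in> I01" using that f_I01 by blast
    then have "0 < Dv g (f x)" by (rule Diff1_plus_Dv_pos[OF g(1)])
    then show ?thesis
      using Dv_comp[OF f(1) g(1) that] Diff1_plus_Dv_pos[OF f(1) that] by (simp add: ln_mult)
  qed
  obtain M where M: "M-lipschitz_on I01 (Dv g)" using is_Ck_on_I_lipschitz_Dv[OF g(2,3)] .
  obtain mg where mg: "0 < mg" "\<And>x. x \<in> I01 \<Longrightarrow> mg \<le> Dv g x"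
    using Diff1_plus_Dv_lower_bound[OF g(1)] by blast
  obtain Mf where Mf: "Mf-lipschitz_on I01 f" using Diff1_plus_lipschitz_on[OF f(1)] .
  have "holder_on \<delta> (M / mg) I01 (\<lambda>x. ln (Dv g x))"
    using holder_on_if_lipschitz_on[OF M order_refl \<delta>] mg by (rule holder_on_ln)
  then have "holder_on \<delta> (M / mg * Mf powr \<delta>) I01 ((\<lambda>x. ln (Dv g x)) \<circ> f)"
    using lipschitz_on_nonneg[OF M] mg(1) \<delta>(1) by (intro holder_on_compose[OF _ _ Mf f_I01]) auto
  then have "holder_on \<delta> (M / mg * Mf powr \<delta> + L) I01 (\<lambda>x. ln (Dv g (f x)) + ln (Dv f x))"
    using L unfolding comp_def by (rule holder_on_add)
  then have "holder_on \<delta> C I01 (\<lambda>x. ln (Dv (g \<circ> f) x))"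
    by (intro holder_on_ln_Dv_if_p_delta_le[OF _ C]) (subst holder_on_cong[OF ln_Dv_comp])
  then have "holder_on \<delta> (C + L) I01 (\<lambda>x. ln (Dv (g \<circ> f) x) - ln (Dv f x))"
    using L by (rule holder_on_diff)
  then have gf: "holder_on \<delta> (C + L) I01 ((\<lambda>x. ln (Dv g x)) \<circ> f)"
    using holder_on_cong[of I01 "\<lambda>x. ln (Dv (g \<circ> f) x) - ln (Dv f x)" "(\<lambda>x. ln (Dv g x)) \<circ> f"]
    by (simp add: ln_Dv_comp)
  have "holder_on \<delta> ((C + L) * (1 / m) powr \<delta>) I01 (((\<lambda>x. ln (Dv g x)) \<circ> f) \<circ> inv_into I01 f)"
    using holder_on_nonneg_I01[OF gf] lipschitz_on_inv_into_Diff1_plus[OF f] \<delta> Diff1_plus_image[OF f(1)]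
    by (intro holder_on_compose[OF gf]) (auto intro!: image_subsetI inv_into_into)
  moreover have "(((\<lambda>x. ln (Dv g x)) \<circ> f) \<circ> inv_into I01 f) x = ln (Dv g x)" if "x \<in> I01" for x
    using that Diff1_plus_image[OF f(1)] by (simp add: f_inv_into_f)
  ultimately show ?thesis by (metis (no_types, lifting) holder_on_cong)
qed

lemma mcomplete_CI_metric: "mcomplete_of CI_metric"
proof -
  have "Metric_space.mcomplete (UNIV::real set) dist"
    using complete_UNIV[where 'a=real] by simp
  then have "mcomplete_of (cfunspace (top_of_set I01) (Metric_space.Self (UNIV::real set) dist))"
    by (rule Met_TC.mcomplete_cfunspace)
  moreover have "Metric_space.Self (UNIV::real set) dist = euclidean_metric"
    by (simp add: Metric_space.Self_def[OF Met_TC.Metric_space_axioms] euclidean_metric_def)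
  ultimately show ?thesis by (simp add: CI_metric_def)
qed

lemma mspace_CI_metric: "h \<in> mspace CI_metric \<longleftrightarrow> h \<in> extensional I01 \<and> continuous_on I01 h"
  unfolding CI_metric_def
  by (subst compactin_mspace_cfunspace) (auto simp: compactin_subtopology)

lemma mdist_CI_metric_le:
  assumes "0 \<le> B" "\<And>x. x \<in> I01 \<Longrightarrow> \<bar>f x - g x\<bar> \<le> B"
  shows "mdist CI_metric f g \<le> B"
  unfolding CI_metric_def by (rule mdist_cfunspace_le) (use assms in \<open>auto simp: dist_real_def\<close>)

lemma mtotally_bounded_CI_metric_if_holder:
  assumes \<delta>: "0 < \<delta>" and S: "S \<subseteq> mspace CI_metric"
    and B: "\<And>h x. h \<in> S \<Longrightarrow> x \<in> I01 \<Longrightarrow> \<bar>h x\<bar> \<le> B"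
    and K: "\<And>h. h \<in> S \<Longrightarrow> holder_on \<delta> K I01 h"
  shows "Metric_space.mtotally_bounded (mspace CI_metric) (mdist CI_metric) S"
  unfolding Metric_space.mtotally_bounded_sequentially[OF Metric_space_mspace_mdist]
proof (intro conjI allI impI S)
  fix \<sigma> :: "nat \<Rightarrow> real \<Rightarrow> real" assume \<sigma>: "range \<sigma> \<subseteq> S"
  obtain g r where r: "strict_mono (r :: nat \<Rightarrow> nat)"
    and lim: "\<And>e. 0 < e \<Longrightarrow> \<exists>N. \<forall>n x. n \<ge> N \<and> x \<in> I01 \<longrightarrow> norm (\<sigma> (r n) x - g x) < e"
  proof (rule Arzela_Ascoli[of I01 \<sigma> B])
    show "compact I01" by simp
    show "norm (\<sigma> n x) \<le> B" if "x \<in> I01" for n x using B[OF range_subsetD[OF \<sigma>] that] by simp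
    fix x e :: real assume "x \<in> I01" "0 < e"
    with holder_on_uniform_modulus[OF \<delta> \<open>0 < e\<close>, of K I01] K \<sigma>
    show "\<exists>d>0. \<forall>n y. y \<in> I01 \<and> norm (x - y) < d \<longrightarrow> norm (\<sigma> n x - \<sigma> n y) < e"
      by (metis range_subsetD real_norm_def)
  qed blast
  have "Metric_space.MCauchy (mspace CI_metric) (mdist CI_metric) (\<sigma> \<circ> r)"
    unfolding Metric_space.MCauchy_def[OF Metric_space_mspace_mdist]
  proof (intro conjI allI impI)
    show "range (\<sigma> \<circ> r) \<subseteq> mspace CI_metric" using \<sigma> S by auto
    fix e :: real assume "0 < e"
    then obtain N where N: "\<And>n x. n \<ge> N \<Longrightarrow> x \<in> I01 \<Longrightarrow> \<bar>\<sigma> (r n) x - g x\<bar> < e / 3"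
      using lim[of "e / 3"] by auto
    have "mdist CI_metric ((\<sigma> \<circ> r) n) ((\<sigma> \<circ> r) n') < e" if nn: "N \<le> n" "N \<le> n'" for n n'
    proof -
      have "mdist CI_metric ((\<sigma> \<circ> r) n) ((\<sigma> \<circ> r) n') \<le> 2 * e / 3"
      proof (rule mdist_CI_metric_le)
        show "\<bar>(\<sigma> \<circ> r) n x - (\<sigma> \<circ> r) n' x\<bar> \<le> 2 * e / 3" if "x \<in> I01" for x
          using N[OF nn(1) that] N[OF nn(2) that] unfolding comp_def abs_less_iff abs_le_iff by linarith
      qed (use \<open>0 < e\<close> in simp)
      then show ?thesis using \<open>0 < e\<close> by simp
    qed
    then show "\<exists>N. \<forall>n n'. N \<le> n \<longrightarrow> N \<le> n' \<longrightarrow> mdist CI_metric ((\<sigma> \<circ> r) n) ((\<sigma> \<circ> r) n') < e"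
      by blast
  qed
  with r show "\<exists>r. strict_mono r \<and> Metric_space.MCauchy (mspace CI_metric) (mdist CI_metric) (\<sigma> \<circ> r)"
    by blast
qed

lemma compactin_closure_of_CI_metric_if_holder:
  assumes \<delta>: "0 < \<delta>" and S: "S \<subseteq> extensional I01"
    and B: "\<And>h x. h \<in> S \<Longrightarrow> x \<in> I01 \<Longrightarrow> \<bar>h x\<bar> \<le> B"
    and K: "\<And>h. h \<in> S \<Longrightarrow> holder_on \<delta> K I01 h"
  shows "compactin (mtopology_of CI_metric) (mtopology_of CI_metric closure_of S)"
proof -
  have "h \<in> mspace CI_metric" if "h \<in> S" for h
    using that S holder_on_imp_continuous_on[OF K[OF that] \<delta>] by (auto simp: mspace_CI_metric)
  then have "Metric_space.mtotally_bounded (mspace CI_metric) (mdist CI_metric) S"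
    using mtotally_bounded_CI_metric_if_holder[OF \<delta>, of S B K] B K by blast
  with mcomplete_CI_metric show ?thesis
    using Metric_space.mtotally_bounded_eq_compact_closure_of[OF Metric_space_mspace_mdist, of CI_metric S]
    by (simp add: mcomplete_of_def mtopology_of_def)
qed

theorem mainTheorem14:
  fixes \<delta> :: real and f :: "real \<Rightarrow> real" and G :: "(real \<Rightarrow> real) set"
  assumes "0 < \<delta>" and "\<delta> < 1/2"
    and "Diff1_delta_plus \<delta> f"
    and "\<forall>g\<in>G. Diff0_3 g"
  shows "\<forall>C>0. compactin (mtopology_of CI_metric)
           (mtopology_of CI_metric closure_of
              {restrict (\<lambda>x. ln (Dv g x)) I01 | g. g \<in> G \<and> p_delta \<delta> (g \<circ> f) \<le> C})"
proof (intro allI impI)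
  fix C :: real
  obtain Kf where f: "Diff1_plus f" and Kf: "holder_on \<delta> Kf I01 (Dv f)"
    using assms(3) unfolding Diff1_delta_plus_def holder_on_def by blast
  obtain m where m: "0 < m" "\<And>x. x \<in> I01 \<Longrightarrow> m \<le> Dv f x" using Diff1_plus_Dv_lower_bound[OF f] by blast
  define K where "K = (C + Kf / m) * (1 / m) powr \<delta>"
  let ?A = "{restrict (\<lambda>x. ln (Dv g x)) I01 | g. g \<in> G \<and> p_delta \<delta> (g \<circ> f) \<le> C}"
  have K: "holder_on \<delta> K I01 h \<and> h 0 = 0" if h: "h \<in> ?A" for h
  proof -
    obtain g where g: "h = restrict (\<lambda>x. ln (Dv g x)) I01" "Diff0_3 g" "p_delta \<delta> (g \<circ> f) \<le> C"
      using h assms(4) by blast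
    then have "holder_on \<delta> K I01 (\<lambda>x. ln (Dv g x))"
      unfolding K_def Diff0_3_def using assms(1,2) f m holder_on_ln[OF Kf m]
      by (intro holder_on_ln_Dv_if_p_delta_comp_le[where k=3]) auto
    then have "holder_on \<delta> K I01 h"
      using holder_on_cong[of I01 h "\<lambda>x. ln (Dv g x)"] g(1) by simp
    moreover have "Dv g 0 = 1" using g(2) by (simp add: Diff0_3_def)
    ultimately show ?thesis using g(1) by simp
  qed
  have "\<bar>h x\<bar> \<le> K" if "h \<in> ?A" "x \<in> I01" for h x
    using K[OF that(1)] holder_on_I01_abs_diff_le[OF _ _ that(2)] assms(1) by fastforce
  with K assms(1) show "compactin (mtopology_of CI_metric) (mtopology_of CI_metric closure_of ?A)"
    by (intro compactin_closure_of_CI_metric_if_holder) auto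
qed

end
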